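(* Let $A\in\mathbb{R}^{n\times n}$ with rows $a_1^T,\dots,a_n^T$ and $B=(b_1,\dots,b_n)^T$ with all $b_j\neq0$. Let $\lambda_1,\dots,\lambda_n$ be pairwise distinct real numbers, none an eigenvalue of $A$. For each $i$ let $H_i$ be the affine hull of the row vectors $k_{ij}=\frac{1}{b_j}(a_j^T-\lambda_ie_j^T)$, $j=1,\dots,n$ (an affine hyperplane of $\mathbb{R}^{1\times n}$). Then $H_1\cap\dots\cap H_n\neq\emptyset$ if and only if $(A,B)$ is controllable; in that case the intersection is a single point $K$, and it satisfies $$\det(\lambda I-A+BK)=\prod_{i=1}^n(\lambda-\lambda_i).$$
   Context: $e_j$ denotes the $j$-th canonical basis vector of $\mathbb{R}^n$; $(A,B)$ controllable means $(B\;AB\;\cdots\;A^{n-1}B)$ is invertible. *)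

theory Defs
  imports "HOL-Analysis.Analysis"
begin

primrec matpow :: "real^'n^'n \<Rightarrow> nat \<Rightarrow> real^'n^'n" where
  "matpow A 0 = mat 1"
| "matpow A (Suc k) = A ** matpow A k"

definition is_eigenvalue :: "real^'n^'n \<Rightarrow> real \<Rightarrow> bool" where
  "is_eigenvalue A mu \<longleftrightarrow> (\<exists>v. v \<noteq> 0 \<and> A *v v = mu *s v)"

text \<open>(A,B) controllable: the n x n matrix (B  AB ... A^(n-1)B) is invertible.
  The column index type 'n is identified with {0..<n} via an enumeration f;
  column i of C is A^(f i) B. (Invertibility does not depend on the chosen enumeration.)\<close>
definition controllable :: "real^'n^'n \<Rightarrow> real^'n \<Rightarrow> bool" where
  "controllable A B \<longleftrightarrow>
     (\<exists>f C. bij_betw f (UNIV :: 'n set) {..<CARD('n)} \<and>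
            (\<forall>i. column i C = matpow A (f i) *v B) \<and> invertible C)"

definition kvec :: "real^'n^'n \<Rightarrow> real^'n \<Rightarrow> real \<Rightarrow> 'n \<Rightarrow> real^'n" where
  "kvec A B lam j = (1 / B $ j) *\<^sub>R (A $ j - lam *\<^sub>R axis j 1)"

definition outer :: "real^'n \<Rightarrow> real^'n \<Rightarrow> real^'n^'n" where
  "outer B K = (\<chi> i j. B $ i * K $ j)"

end

theory Submission
  imports Defs
begin

(*
  Let v_i solve (A - lambda_i I) v_i = B, so that A v_i = B + lambda_i v_i.  Row j of
  A - lambda_i I has inner product b_j with v_i, so the k_ij are spanning points of the
  hyperplane K v_i = 1, which is therefore H_i.  If some K lies on every H_i, each linear
  relation among the v_i has coefficient sum K (sum c_i v_i) = 0; applying A and subtracting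
  lambda_k times the relation then yields a relation of smaller support, so the v_i form a
  basis.  Hence K is unique, and A - BK has the eigenvectors v_i with eigenvalues lambda_i,
  which gives the determinant.  Controllability means that the Krylov space spanned by the
  A^k B is everything.  The v_i lie in it, as it contains B and is invariant under the
  invertible A - lambda_i I; conversely, if the v_i are dependent, the same support argument
  produces a relation with nonzero coefficient sum, which puts B, and with it the Krylov
  space, into the A-invariant span of the v_i.
*)

lemma linear_image_span_subset:
  assumes "linear f" and "f ` S \<subseteq> span S"
  shows "f ` span S \<subseteq> span S"
  using assms by (simp add: span_minimal flip: span_linear_image)

lemma inj_linear_image_invariant_subspace:
  fixes f :: "'a::euclidean_space \<Rightarrow> 'a"
  assumes "linear f" and "inj f" and "subspace W" and "f ` W \<subseteq> W"
  shows "f ` W = W"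
proof (rule subspace_dim_equal)
  show "subspace (f ` W)"
    using span_linear_image[OF assms(1), of W] assms(3) by (metis span_eq_iff subspace_span)
  show "dim W \<le> dim (f ` W)"
    using dim_image_eq[OF assms(1), of W] assms(2) by (simp add: inj_on_def inj_def)
qed (use assms in auto)

lemma exists_in_span_of_predecessors:
  fixes g :: "nat \<Rightarrow> 'a::euclidean_space"
  shows "\<exists>k\<le>DIM('a). g k \<in> span (g ` {..<k})"
proof (rule ccontr)
  assume "\<not> ?thesis"
  hence new: "g k \<notin> span (g ` {..<k})" if "k \<le> DIM('a)" for k
    using that by blast
  have "independent (g ` {..<k}) \<and> card (g ` {..<k}) = k" if "k \<le> Suc DIM('a)" for k
    using that
  proof (induction k)
    case 0
    show ?case by (simp add: real_vector.independent_empty)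
  next
    case (Suc k)
    have "g k \<notin> span (g ` {..<k})"
      using new Suc.prems by simp
    moreover have "g ` {..<Suc k} = insert (g k) (g ` {..<k})"
      by (simp add: lessThan_Suc)
    ultimately show ?case
      using Suc by (auto simp: independent_insert span_base)
  qed
  hence "independent (g ` {..<Suc DIM('a)})" and "card (g ` {..<Suc DIM('a)}) = Suc DIM('a)"
    by simp_all
  thus False
    using independent_card_le[of "g ` {..<Suc DIM('a)}"] by simp
qed

lemma iterate_in_span_initial_segment:
  assumes "linear f" and g_Suc: "\<And>j. g (Suc j) = f (g j)" and gk: "g k \<in> span (g ` {..<k})"
  shows "g m \<in> span (g ` {..<k})"
proof (induction m)
  case 0
  show ?case
    using gk by (cases k) (auto intro: span_base)
next
  case (Suc m)
  have "f (g j) \<in> span (g ` {..<k})" if "j < k" for j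
  proof (cases "Suc j = k")
    case True
    thus ?thesis using gk by (simp flip: g_Suc)
  next
    case False
    thus ?thesis using that by (simp flip: g_Suc add: span_base)
  qed
  hence "f ` g ` {..<k} \<subseteq> span (g ` {..<k})"
    by blast
  hence "f ` span (g ` {..<k}) \<subseteq> span (g ` {..<k})"
    by (rule linear_image_span_subset[OF \<open>linear f\<close>])
  thus ?case
    using Suc by (auto simp: g_Suc)
qed

lemma span_iterates_eq_span_initial_segment:
  fixes g :: "nat \<Rightarrow> 'a::euclidean_space"
  assumes "linear f" and "\<And>j. g (Suc j) = f (g j)"
  shows "span (range g) = span (g ` {..<DIM('a)})"
proof -
  obtain k where "k \<le> DIM('a)" and "g k \<in> span (g ` {..<k})"
    using exists_in_span_of_predecessors by blast
  hence "g m \<in> span (g ` {..<DIM('a)})" for m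
    using iterate_in_span_initial_segment[of f g k, OF assms] span_mono[of "g ` {..<k}" "g ` {..<DIM('a)}"]
    by fastforce
  hence "span (range g) \<subseteq> span (g ` {..<DIM('a)})"
    by (intro span_minimal) auto
  moreover have "span (g ` {..<DIM('a)}) \<subseteq> span (range g)"
    by (intro span_mono image_mono) simp
  ultimately show ?thesis
    by blast
qed

lemma affine_hull_eq_hyperplane:
  fixes k :: "'i::finite \<Rightarrow> 'a::real_inner"
  assumes "span (range k) = UNIV" and kv: "\<And>j. k j \<bullet> v = 1"
  shows "affine hull (range k) = {x. x \<bullet> v = 1}"
proof
  show "affine hull (range k) \<subseteq> {x. x \<bullet> v = 1}"
    using kv affine_hyperplane[of v 1] by (intro hull_minimal) (auto simp: inner_commute)
  show "{x. x \<bullet> v = 1} \<subseteq> affine hull (range k)"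
  proof
    fix x assume "x \<in> {x. x \<bullet> v = 1}"
    moreover obtain u where x: "x = (\<Sum>w\<in>range k. u w *\<^sub>R w)"
      using assms(1) span_finite[of "range k"] by auto
    moreover have "x \<bullet> v = sum u (range k)"
      unfolding x inner_sum_left by (intro sum.cong) (auto simp: kv)
    ultimately show "x \<in> affine hull (range k)"
      by (auto simp: affine_hull_finite)
  qed
qed

lemma resolvent_vectors_independent:
  fixes v :: "'i::finite \<Rightarrow> 'a::real_vector"
  assumes "linear f" and fv: "\<And>i. f (v i) = b + lam i *\<^sub>R v i" and "inj lam"
    and rel: "\<And>c. (\<Sum>i\<in>UNIV. c i *\<^sub>R v i) = 0 \<Longrightarrow> sum c UNIV = 0"
  shows "(\<Sum>i\<in>UNIV. c i *\<^sub>R v i) = 0 \<Longrightarrow> c i = 0"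
proof (induction "card {i. c i \<noteq> 0}" arbitrary: c i rule: less_induct)
  case less
  show ?case
  proof (rule ccontr)
    assume "c i \<noteq> 0"
    define c' where "c' j = c j * (lam j - lam i)" for j
    have "f (\<Sum>j\<in>UNIV. c j *\<^sub>R v j) = sum c UNIV *\<^sub>R b + (\<Sum>j\<in>UNIV. (c j * lam j) *\<^sub>R v j)"
      by (simp add: linear_sum[OF \<open>linear f\<close>] linear_scale[OF \<open>linear f\<close>] fv scaleR_add_right
          sum.distrib scaleR_sum_left)
    with less.prems rel have "(\<Sum>j\<in>UNIV. (c j * lam j) *\<^sub>R v j) = 0"
      by (simp add: linear_0[OF \<open>linear f\<close>])
    moreover have "(\<Sum>j\<in>UNIV. c' j *\<^sub>R v j)
        = (\<Sum>j\<in>UNIV. (c j * lam j) *\<^sub>R v j) - lam i *\<^sub>R (\<Sum>j\<in>UNIV. c j *\<^sub>R v j)"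
      by (simp add: c'_def algebra_simps scaleR_sum_right sum_subtractf)
    ultimately have c'_rel: "(\<Sum>j\<in>UNIV. c' j *\<^sub>R v j) = 0"
      using less.prems by simp
    have "{j. c' j \<noteq> 0} \<subset> {j. c j \<noteq> 0}"
      using \<open>c i \<noteq> 0\<close> by (auto simp: c'_def)
    hence "card {j. c' j \<noteq> 0} < card {j. c j \<noteq> 0}"
      by (simp add: psubset_card_mono)
    with less.hyps c'_rel have "c' j = 0" for j
      by blast
    hence "c j = 0" if "j \<noteq> i" for j
      using that \<open>inj lam\<close> by (auto simp: c'_def inj_eq)
    hence "sum c UNIV = c i"
      by (simp add: sum.remove[of UNIV i])
    thus False
      using rel[OF less.prems] \<open>c i \<noteq> 0\<close> by simp
  qed
qed

lemma resolvent_vectors_dependent_imp_in_span: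
  fixes v :: "'i::finite \<Rightarrow> 'a::real_vector"
  assumes "linear f" and fv: "\<And>i. f (v i) = b + lam i *\<^sub>R v i" and "inj lam"
    and "(\<Sum>i\<in>UNIV. c i *\<^sub>R v i) = 0" and "c i \<noteq> 0"
  shows "b \<in> span (range v)"
proof -
  obtain d where d_rel: "(\<Sum>i\<in>UNIV. d i *\<^sub>R v i) = 0" and "sum d UNIV \<noteq> 0"
    using resolvent_vectors_independent[OF assms(1-3)] assms(4,5) by blast
  have "0 = f (\<Sum>i\<in>UNIV. d i *\<^sub>R v i)"
    by (simp add: d_rel linear_0[OF \<open>linear f\<close>])
  also have "\<dots> = sum d UNIV *\<^sub>R b + (\<Sum>i\<in>UNIV. (d i * lam i) *\<^sub>R v i)"
    by (simp add: linear_sum[OF \<open>linear f\<close>] linear_scale[OF \<open>linear f\<close>] fv scaleR_add_right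
        sum.distrib scaleR_sum_left)
  finally have "sum d UNIV *\<^sub>R b = - (\<Sum>i\<in>UNIV. (d i * lam i) *\<^sub>R v i)"
    by (simp add: eq_neg_iff_add_eq_0)
  hence "b = (1 / sum d UNIV) *\<^sub>R - (\<Sum>i\<in>UNIV. (d i * lam i) *\<^sub>R v i)"
    using \<open>sum d UNIV \<noteq> 0\<close> by (subst eq_vector_fraction_iff) simp
  also have "\<dots> \<in> span (range v)"
    by (intro span_scale span_neg span_sum) (simp add: span_base)
  finally show ?thesis .
qed

lemma matrix_vector_mult_shift: "(A - x *\<^sub>R mat 1) *v v = A *v v - x *\<^sub>R (v::real^'n)"
  by (simp add: matrix_vector_mult_diff_rdistrib flip: scaleR_matrix_vector_assoc)

lemma resolvent_eq:
  fixes A :: "real^'n^'n"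
  assumes "(A - x *\<^sub>R mat 1) *v v = b"
  shows "A *v v = b + x *\<^sub>R v"
  using assms unfolding matrix_vector_mult_shift by (simp add: algebra_simps)

lemma invertible_shift_if_not_eigenvalue:
  "\<not> is_eigenvalue A x \<Longrightarrow> invertible (A - x *\<^sub>R mat 1)"
  unfolding invertible_left_inverse matrix_left_invertible_ker is_eigenvalue_def
  by (auto simp: matrix_vector_mult_shift scalar_mult_eq_scaleR)

lemma outer_mult_vector: "outer B K *v x = (K \<bullet> x) *\<^sub>R (B::real^'n)"
  by (simp add: vec_eq_iff matrix_vector_mult_def outer_def inner_vec_def sum_distrib_left mult_ac)

lemma invertible_iff_span_columns: "invertible (C::real^'n^'n) \<longleftrightarrow> span (columns C) = UNIV"
  by (simp add: invertible_right_inverse matrix_right_invertible_span_columns span_vec_eq)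

lemma invertible_matrix_of_columns_iff_span:
  fixes v :: "'n \<Rightarrow> real^'n"
  shows "invertible (\<chi> r j. v j $ r) \<longleftrightarrow> span (range v) = UNIV"
proof -
  have "columns (\<chi> r j. v j $ r) = range v"
    by (auto simp: columns_def column_def vec_eq_iff)
  thus ?thesis
    by (simp add: invertible_iff_span_columns)
qed

lemma span_UNIV_iff_independent_family:
  fixes v :: "'n \<Rightarrow> real^'n"
  shows "span (range v) = UNIV \<longleftrightarrow> (\<forall>c. (\<Sum>i\<in>UNIV. c i *\<^sub>R v i) = 0 \<longrightarrow> (\<forall>i. c i = 0))"
proof -
  have "column j (\<chi> r j. v j $ r) = v j" for j
    by (simp add: column_def vec_eq_iff)
  thus ?thesis
    by (simp add: flip: invertible_matrix_of_columns_iff_span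
        add: invertible_left_inverse matrix_left_invertible_independent_columns scalar_mult_eq_scaleR)
qed

lemma ex1_inner_prescribed:
  fixes v :: "'n \<Rightarrow> real^'n"
  assumes "span (range v) = UNIV"
  shows "\<exists>!K. \<forall>j. K \<bullet> v j = y $ j"
proof -
  define M :: "real^'n^'n" where "M = (\<chi> r j. v j $ r)"
  have MK: "transpose M *v K = (\<chi> j. K \<bullet> v j)" for K
    by (simp add: M_def vec_eq_iff matrix_vector_mult_def transpose_def inner_vec_def mult.commute)
  have "invertible (transpose M)"
    using assms by (simp add: M_def invertible_matrix_of_columns_iff_span transpose_invertible)
  hence inj: "inj ((*v) (transpose M))" and "surj ((*v) (transpose M))"
    by (simp_all add: inj_matrix_vector_mult invertible_right_inverse matrix_right_invertible_surjective)
  then obtain K where K: "transpose M *v K = y"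
    by (metis surjD)
  show ?thesis
  proof (rule ex1I)
    show "\<forall>j. K \<bullet> v j = y $ j"
      using K unfolding MK by (simp add: vec_eq_iff)
  next
    fix K' assume "\<forall>j. K' \<bullet> v j = y $ j"
    hence "transpose M *v K' = transpose M *v K"
      using K unfolding MK by (simp add: vec_eq_iff)
    thus "K' = K"
      by (rule injD[OF inj])
  qed
qed

lemma det_eq_prod_eigenvalues:
  fixes X :: "real^'n^'n" and v :: "'n \<Rightarrow> real^'n"
  assumes "span (range v) = UNIV" and Xv: "\<And>j. X *v v j = d j *\<^sub>R v j"
  shows "det X = (\<Prod>j\<in>UNIV. d j)"
proof -
  define M :: "real^'n^'n" where "M = (\<chi> r j. v j $ r)"
  define D :: "real^'n^'n" where "D = (\<chi> i j. if i = j then d i else 0)"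
  have "X ** M = M ** D"
  proof -
    have "(M ** D) $ r $ j = (\<Sum>k\<in>UNIV. if k = j then v j $ r * d j else 0)" for r j
      unfolding matrix_matrix_mult_def M_def D_def vec_lambda_beta by (rule sum.cong) auto
    moreover have "(X ** M) $ r $ j = (X *v v j) $ r" for r j
      by (simp add: matrix_matrix_mult_def matrix_vector_mult_def M_def)
    ultimately show ?thesis
      by (simp add: vec_eq_iff Xv mult.commute)
  qed
  hence "det X * det M = det M * det D"
    by (metis det_mul)
  moreover have "det M \<noteq> 0"
    using assms(1) by (simp add: M_def invertible_matrix_of_columns_iff_span flip: invertible_det_nz)
  ultimately have "det X = det D"
    by simp
  also have "\<dots> = (\<Prod>j\<in>UNIV. d j)"
    by (subst det_diagonal) (simp_all add: D_def)
  finally show ?thesis .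
qed

definition krylov_space :: "real^'n^'n \<Rightarrow> real^'n \<Rightarrow> (real^'n) set" where
  "krylov_space A b = span (range (\<lambda>k. matpow A k *v b))"

lemma matpow_Suc_mult_vector: "matpow A (Suc k) *v b = A *v (matpow A k *v b)"
  by (simp add: matrix_vector_mul_assoc)

lemma base_in_krylov_space: "b \<in> krylov_space A b"
  unfolding krylov_space_def by (rule span_base) (metis (no_types) matpow.simps(1) matrix_vector_mul_lid rangeI)

lemma subspace_krylov_space: "subspace (krylov_space A b)"
  by (simp add: krylov_space_def)

lemma krylov_space_invariant:
  assumes "y \<in> krylov_space A b"
  shows "A *v y \<in> krylov_space A b"
proof -
  have "(*v) A ` range (\<lambda>k. matpow A k *v b) \<subseteq> range (\<lambda>k. matpow A k *v b)"
    by (auto simp del: matpow.simps simp flip: matpow_Suc_mult_vector)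
  hence "(*v) A ` range (\<lambda>k. matpow A k *v b) \<subseteq> span (range (\<lambda>k. matpow A k *v b))"
    using span_superset by blast
  hence "(*v) A ` krylov_space A b \<subseteq> krylov_space A b"
    unfolding krylov_space_def by (rule linear_image_span_subset[OF matrix_vector_mul_linear])
  thus ?thesis
    using assms by blast
qed

lemma krylov_space_minimal:
  assumes "subspace U" and "b \<in> U" and "\<And>y. y \<in> U \<Longrightarrow> A *v y \<in> U"
  shows "krylov_space A b \<subseteq> U"
proof -
  have "matpow A k *v b \<in> U" for k
    by (induction k) (simp_all add: assms(2,3) flip: matrix_vector_mul_assoc)
  thus ?thesis
    unfolding krylov_space_def using assms(1) by (intro span_minimal) auto
qed

lemma controllable_iff_krylov_space:
  fixes A :: "real^'n^'n"
  shows "controllable A B \<longleftrightarrow> krylov_space A B = UNIV"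
proof -
  let ?g = "\<lambda>k. matpow A k *v B"
  have "span (range ?g) = span (?g ` {..<DIM(real^'n)})"
    using span_iterates_eq_span_initial_segment[of "(*v) A" ?g] by (simp add: matrix_vector_mul_assoc)
  hence krylov: "krylov_space A B = span (?g ` {..<CARD('n)})"
    by (simp add: krylov_space_def)
  have cols: "columns C = ?g ` {..<CARD('n)}"
    if "bij_betw f UNIV {..<CARD('n)}" and "\<forall>i. column i C = ?g (f i)" for f and C :: "real^'n^'n"
  proof -
    have "columns C = ?g ` range f"
      using that(2) by (auto simp: columns_def)
    thus ?thesis
      using that(1) by (simp add: bij_betw_def)
  qed
  show ?thesis
  proof
    assume "controllable A B"
    then obtain f C where "bij_betw f (UNIV :: 'n set) {..<CARD('n)}"
      and "\<forall>i. column i C = ?g (f i)" and "invertible C"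
      unfolding controllable_def by blast
    thus "krylov_space A B = UNIV"
      by (simp add: krylov cols invertible_iff_span_columns)
  next
    assume "krylov_space A B = UNIV"
    obtain f where f: "bij_betw f (UNIV :: 'n set) {..<CARD('n)}"
      using ex_bij_betw_finite_nat[of "UNIV :: 'n set"] by (auto simp: atLeast0LessThan)
    define C :: "real^'n^'n" where "C = (\<chi> r i. ?g (f i) $ r)"
    have "\<forall>i. column i C = ?g (f i)"
      by (simp add: C_def column_def vec_eq_iff)
    moreover from this f \<open>krylov_space A B = UNIV\<close> have "invertible C"
      by (simp add: krylov cols invertible_iff_span_columns)
    ultimately show "controllable A B"
      unfolding controllable_def using f by blast
  qed
qed

lemma resolvent_in_krylov_space:
  assumes inv: "invertible (A - x *\<^sub>R mat 1)" and v: "(A - x *\<^sub>R mat 1) *v v = b"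
  shows "v \<in> krylov_space A b"
proof -
  let ?N = "A - x *\<^sub>R mat 1"
  have "?N *v y \<in> krylov_space A b" if "y \<in> krylov_space A b" for y
    using that subspace_krylov_space[of A b]
    by (simp add: matrix_vector_mult_shift krylov_space_invariant subspace_diff subspace_scale)
  hence "(*v) ?N ` krylov_space A b = krylov_space A b"
    by (intro inj_linear_image_invariant_subspace)
      (auto simp: inj_matrix_vector_mult[OF inv] subspace_krylov_space)
  then obtain w where "w \<in> krylov_space A b" and "?N *v w = b"
    using base_in_krylov_space by (metis imageE)
  moreover have "w = v"
    using \<open>?N *v w = b\<close> v inj_matrix_vector_mult[OF inv] by (auto dest: injD)
  ultimately show ?thesis
    by simp
qed

lemma controllable_iff_resolvents_span:
  fixes A :: "real^'n^'n" and v :: "'n \<Rightarrow> real^'n"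
  assumes "inj lam" and inv: "\<And>i. invertible (A - lam i *\<^sub>R mat 1)"
    and v: "\<And>i. (A - lam i *\<^sub>R mat 1) *v v i = B"
  shows "controllable A B \<longleftrightarrow> span (range v) = UNIV"
proof -
  have Av: "A *v v i = B + lam i *\<^sub>R v i" for i
    by (rule resolvent_eq[OF v])
  have v_krylov: "span (range v) \<subseteq> krylov_space A B"
    using resolvent_in_krylov_space[OF inv v] by (intro span_minimal) (auto simp: subspace_krylov_space)
  have krylov_v: "krylov_space A B \<subseteq> span (range v)" if not_span: "span (range v) \<noteq> UNIV"
  proof (rule krylov_space_minimal)
    obtain c i where "(\<Sum>i\<in>UNIV. c i *\<^sub>R v i) = 0" and "c i \<noteq> 0"
      using not_span span_UNIV_iff_independent_family by blast
    thus B: "B \<in> span (range v)"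
      by (rule resolvent_vectors_dependent_imp_in_span[OF matrix_vector_mul_linear Av \<open>inj lam\<close>])
    have "A *v v i \<in> span (range v)" for i
      unfolding Av by (rule span_add[OF B span_scale[OF span_base]]) simp
    hence "(*v) A ` range v \<subseteq> span (range v)"
      by blast
    thus "A *v y \<in> span (range v)" if "y \<in> span (range v)" for y
      using that linear_image_span_subset[OF matrix_vector_mul_linear] by blast
  qed simp
  show ?thesis
    unfolding controllable_iff_krylov_space
  proof
    assume "krylov_space A B = UNIV"
    thus "span (range v) = UNIV"
      using krylov_v by (metis top.extremum_uniqueI)
  qed (use v_krylov in auto)
qed

lemma affine_hull_kvec:
  fixes A :: "real^'n^'n"
  assumes B: "\<forall>j. B $ j \<noteq> 0" and inv: "invertible (A - x *\<^sub>R mat 1)"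
    and v: "(A - x *\<^sub>R mat 1) *v v = B"
  shows "affine hull (range (kvec A B x)) = {K. K \<bullet> v = 1}"
proof (rule affine_hull_eq_hyperplane)
  let ?N = "A - x *\<^sub>R mat 1"
  have row_N: "row j ?N = ?N $ j" for j
    by (simp add: row_def vec_eq_iff)
  have kvec_row: "kvec A B x j = (1 / B $ j) *\<^sub>R row j ?N" for j
    by (simp add: kvec_def row_def vec_eq_iff mat_def axis_def)
  show "kvec A B x j \<bullet> v = 1" for j
    using matrix_vector_mul_component[of ?N v j] B[rule_format, of j] by (simp add: kvec_row v row_N)
  have "row j ?N \<in> span (range (kvec A B x))" for j
    using B span_scale[of "kvec A B x j" _ "B $ j"] by (simp add: kvec_row span_base)
  hence "span (rows ?N) \<subseteq> span (range (kvec A B x))"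
    by (intro span_minimal) (auto simp: rows_def)
  moreover have "span (rows ?N) = UNIV"
    using inv by (simp add: invertible_left_inverse matrix_left_invertible_span_rows)
  ultimately show "span (range (kvec A B x)) = UNIV"
    by blast
qed

lemma closed_loop_eigenvector:
  assumes "A *v v = B + l *\<^sub>R v" and "K \<bullet> v = 1"
  shows "(x *\<^sub>R mat 1 - A + outer B K) *v v = (x - l) *\<^sub>R v"
  using assms
  by (simp add: matrix_vector_mult_add_rdistrib matrix_vector_mult_diff_rdistrib outer_mult_vector
      algebra_simps flip: scaleR_matrix_vector_assoc)

lemma resolvents_span_iff_common_point:
  fixes A :: "real^'n^'n" and v :: "'n \<Rightarrow> real^'n"
  assumes "inj lam" and Av: "\<And>i. A *v v i = B + lam i *\<^sub>R v i"
  shows "span (range v) = UNIV \<longleftrightarrow> (\<exists>K. \<forall>i. K \<bullet> v i = 1)"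
proof
  assume "span (range v) = UNIV"
  thus "\<exists>K. \<forall>i. K \<bullet> v i = 1"
    using ex1_implies_ex[OF ex1_inner_prescribed[of v 1]] by simp
next
  assume "\<exists>K. \<forall>i. K \<bullet> v i = 1"
  then obtain K where Kv: "\<forall>i. K \<bullet> v i = 1" ..
  have "sum c UNIV = 0" if "(\<Sum>i\<in>UNIV. c i *\<^sub>R v i) = 0" for c
  proof -
    have "sum c UNIV = K \<bullet> (\<Sum>i\<in>UNIV. c i *\<^sub>R v i)"
      by (simp add: inner_sum_right Kv)
    thus ?thesis
      using that by simp
  qed
  thus "span (range v) = UNIV"
    using resolvent_vectors_independent[OF matrix_vector_mul_linear Av \<open>inj lam\<close>]
    by (simp add: span_UNIV_iff_independent_family)
qed

lemma unique_common_point_places_poles: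
  fixes A :: "real^'n^'n" and v :: "'n \<Rightarrow> real^'n"
  assumes Av: "\<And>i. A *v v i = B + lam i *\<^sub>R v i" and span_v: "span (range v) = UNIV"
  shows "\<exists>K. {K. \<forall>i. K \<bullet> v i = 1} = {K} \<and>
           (\<forall>x. det (x *\<^sub>R mat 1 - A + outer B K) = (\<Prod>i\<in>UNIV. x - lam i))"
proof -
  have "\<exists>!K. \<forall>i. K \<bullet> v i = 1"
    using ex1_inner_prescribed[OF span_v, of 1] by simp
  then obtain K where K: "\<forall>i. K \<bullet> v i = 1" and uniq: "\<forall>K'. (\<forall>i. K' \<bullet> v i = 1) \<longrightarrow> K' = K"
    by (rule ex1E)
  have "{K. \<forall>i. K \<bullet> v i = 1} = {K}"
    using K uniq by blast
  moreover have "det (x *\<^sub>R mat 1 - A + outer B K) = (\<Prod>i\<in>UNIV. x - lam i)" for x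
    using K by (intro det_eq_prod_eigenvalues[OF span_v] closed_loop_eigenvector[OF Av]) simp
  ultimately show ?thesis
    by blast
qed

theorem mainTheorem7:
  fixes A :: "real^'n^'n" and B :: "real^'n" and lam :: "'n \<Rightarrow> real"
  assumes "\<forall>j. B $ j \<noteq> 0"
    and "inj lam"
    and "\<forall>i. \<not> is_eigenvalue A (lam i)"
  defines "H \<equiv> (\<lambda>i. affine hull (range (kvec A B (lam i))))"
  shows "((\<Inter>i. H i) \<noteq> {} \<longleftrightarrow> controllable A B) \<and>
         (controllable A B \<longrightarrow>
            (\<exists>K. (\<Inter>i. H i) = {K} \<and>
                 (\<forall>x::real. det (x *\<^sub>R mat 1 - A + outer B K) = (\<Prod>i\<in>UNIV. x - lam i))))"
proof -
  have inv: "invertible (A - lam i *\<^sub>R mat 1)" for i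
    using assms(3) by (simp add: invertible_shift_if_not_eigenvalue)
  hence "\<forall>i. \<exists>w. (A - lam i *\<^sub>R mat 1) *v w = B"
    by (metis invertible_right_inverse matrix_right_invertible_surjective surjD)
  then obtain v where v: "\<And>i. (A - lam i *\<^sub>R mat 1) *v v i = B"
    by metis
  have Av: "A *v v i = B + lam i *\<^sub>R v i" for i
    by (rule resolvent_eq[OF v])
  have "(\<Inter>i. H i) = {K. \<forall>i. K \<bullet> v i = 1}"
    using affine_hull_kvec[OF assms(1) inv v] by (auto simp: H_def)
  thus ?thesis
    unfolding controllable_iff_resolvents_span[OF assms(2) inv v]
    using resolvents_span_iff_common_point[OF assms(2) Av] unique_common_point_places_poles[OF Av]
    by auto
qed

end
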